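(* Consider the Random Apollonian Network process, and let $Z_k(t)$ denote the number of vertices of degree $k$ after $t$ steps, $k \geq 3$. For any $k \geq 3$ there exists a constant $b_k$ (depending on $k$) such that for $t$ sufficiently large $$ |\mathbb{E}[Z_k(t)] - b_k t| \leq K, \quad\text{where } K=3.6.$$ Furthermore, let $\lambda>0$. For any $k \geq 3$, $$\Pr\big(|Z_k(t) - \mathbb{E}[Z_k(t)]| \geq \lambda\big) \leq 2e^{-\frac{\lambda^2}{72t}}.$$
   Context: A Random Apollonian Network (RAN) is generated as follows: start (at time $t=0$) with a single triangular face (a triangle in the plane). At each step $t=1,2,\dots$, pick one of the current (bounded) triangular faces uniformly at random, insert a new vertex inside it, and connect the new vertex to the three vertices on the boundary of that face; this subdivides the chosen face into three new triangular faces. Thus after $t$ steps there are $2t+1$ triangular faces. $Z_k(t)$ is the (random) number of vertices of degree exactly $k$ in the graph after $t$ steps. *)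

theory Defs
  imports "HOL-Probability.Probability"
begin

text \<open>Vertices are natural numbers 0,1,2,...; the
 initial triangle has vertices 0,1,2; the vertex inserted at step t is t+2.
 A state records the number of vertices, the list of current (bounded)
 triangular faces, and the set of (undirected) edges as 2-element sets.\<close>

record ran_state =
  nverts :: nat
  faces :: "(nat \<times> nat \<times> nat) list"
  edges :: "nat set set"

definition ran_init :: ran_state where
  "ran_init = \<lparr> nverts = 3, faces = [(0,1,2)], edges = {{0,1},{1,2},{0,2}} \<rparr>"

definition ran_insert :: "ran_state \<Rightarrow> nat \<Rightarrow> ran_state" where
  "ran_insert s i =
     (case faces s ! i of (a, b, c) \<Rightarrow>
        let v = nverts s in
        \<lparr> nverts = Suc v,
          faces = (faces s)[i := (a, b, v)] @ [(a, v, c), (v, b, c)],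
          edges = edges s \<union> {{a, v}, {b, v}, {c, v}} \<rparr>)"

definition ran_step :: "ran_state \<Rightarrow> ran_state pmf" where
  "ran_step s = map_pmf (ran_insert s) (pmf_of_set {..<length (faces s)})"

primrec RAN :: "nat \<Rightarrow> ran_state pmf" where
  "RAN 0 = return_pmf ran_init"
| "RAN (Suc t) = bind_pmf (RAN t) ran_step"

definition degree :: "ran_state \<Rightarrow> nat \<Rightarrow> nat" where
  "degree s v = card {e \<in> edges s. v \<in> e}"

definition Z :: "nat \<Rightarrow> ran_state \<Rightarrow> nat" where
  "Z k s = card {v. v < nverts s \<and> degree s v = k}"

end

theory Submission
  imports Defs
begin

text \<open>Inserting a vertex into a uniformly random face raises by one the degree of
  each of its three corners, and a vertex of degree \<open>j\<close> lies on \<open>j\<close> faces (\<open>j - 1\<close> for the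
  three outer vertices). Hence the expectations \<open>x\<^sub>k(t) = E Z\<^sub>k(t)\<close> satisfy
  \<open>x\<^sub>k(t+1) = x\<^sub>k(t) + [k = 3] - (k x\<^sub>k(t) - (k - 1) x\<^sub>k\<^sub>-\<^sub>1(t)) / (2t + 1) + O(1/t)\<close>,
  whose solution grows like \<open>b\<^sub>k t\<close> with \<open>b\<^sub>k = 24 / (k (k + 1) (k + 2))\<close>; the error
  \<open>e\<^sub>k(t) = x\<^sub>k(t) - b\<^sub>k t\<close> obeys a contracting recurrence driven by \<open>e\<^sub>k\<^sub>-\<^sub>1\<close>, and induction
  on \<open>k\<close> bounds it eventually by \<open>3.2 + \<eta>\<close>.
  For concentration, the network after \<open>t\<close> steps is a function of \<open>t\<close> independent uniform
  face indices. Changing one index changes the degrees of at most seven vertices (the corners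
  of the two faces and the new vertex), so \<open>Z\<^sub>k\<close> has bounded differences \<open>7\<close> and the
  Azuma--Hoeffding (McDiarmid) inequality gives \<open>2 exp (-2 \<lambda>\<^sup>2 / (49 t))\<close>.\<close>

section \<open>A bounded differences inequality\<close>

lemma expectation_bind_pmf_finite:
  fixes f :: "'b \<Rightarrow> real"
  assumes M: "finite (set_pmf M)" and N: "\<And>x. x \<in> set_pmf M \<Longrightarrow> finite (set_pmf (N x))"
  shows "measure_pmf.expectation (bind_pmf M N) f
       = measure_pmf.expectation M (\<lambda>x. measure_pmf.expectation (N x) f)"
proof -
  have "measure_pmf.expectation (bind_pmf M N) f
      = (\<Sum>x\<in>set_pmf M. pmf M x *\<^sub>R measure_pmf.expectation (N x) f)"
    using assms by (intro pmf_expectation_bind) auto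
  also have "\<dots> = measure_pmf.expectation M (\<lambda>x. measure_pmf.expectation (N x) f)"
    using M by (subst integral_measure_pmf_real[OF M]) (auto simp: mult.commute)
  finally show ?thesis .
qed

fun seq_pmf :: "'a pmf list \<Rightarrow> 'a list pmf" where
  "seq_pmf [] = return_pmf []"
| "seq_pmf (p # ps) = bind_pmf p (\<lambda>x. map_pmf (Cons x) (seq_pmf ps))"

fun differ_at_most_once :: "'a list \<Rightarrow> 'a list \<Rightarrow> bool" where
  "differ_at_most_once [] [] = True"
| "differ_at_most_once (x # xs) (y # ys) =
     (if x = y then differ_at_most_once xs ys else xs = ys)"
| "differ_at_most_once _ _ = False"

definition bounded_differences :: "real \<Rightarrow> 'a pmf list \<Rightarrow> ('a list \<Rightarrow> real) \<Rightarrow> bool" where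
  "bounded_differences c ps f \<longleftrightarrow> (\<forall>xs\<in>set_pmf (seq_pmf ps). \<forall>ys\<in>set_pmf (seq_pmf ps).
     differ_at_most_once xs ys \<longrightarrow> \<bar>f xs - f ys\<bar> \<le> c)"

lemma differ_at_most_once_refl [simp]: "differ_at_most_once xs xs"
  by (induction xs) auto

lemma finite_set_pmf_seq_pmf:
  "(\<And>p. p \<in> set ps \<Longrightarrow> finite (set_pmf p)) \<Longrightarrow> finite (set_pmf (seq_pmf ps))"
  by (induction ps) auto

lemma expectation_seq_pmf_Cons:
  fixes f :: "'a list \<Rightarrow> real"
  assumes "\<And>q. q \<in> set (p # ps) \<Longrightarrow> finite (set_pmf q)"
  shows "measure_pmf.expectation (seq_pmf (p # ps)) f
       = measure_pmf.expectation p (\<lambda>x. measure_pmf.expectation (seq_pmf ps) (\<lambda>xs. f (x # xs)))"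
  using assms by (simp add: expectation_bind_pmf_finite finite_set_pmf_seq_pmf)

lemma bounded_differences_Cons:
  assumes "bounded_differences c (p # ps) f" and "x \<in> set_pmf p"
  shows "bounded_differences c ps (\<lambda>xs. f (x # xs))"
  using assms by (auto simp: bounded_differences_def)

lemma expectation_Cons_le:
  fixes f :: "'a list \<Rightarrow> real"
  assumes fin: "\<And>q. q \<in> set ps \<Longrightarrow> finite (set_pmf q)"
    and bd: "bounded_differences c (p # ps) f" and x: "x \<in> set_pmf p" and y: "y \<in> set_pmf p"
  shows "measure_pmf.expectation (seq_pmf ps) (\<lambda>xs. f (x # xs))
       \<le> measure_pmf.expectation (seq_pmf ps) (\<lambda>xs. f (y # xs)) + c"
proof -
  have int: "integrable (seq_pmf ps) g" for g :: "'a list \<Rightarrow> real"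
    using fin by (intro integrable_measure_pmf_finite finite_set_pmf_seq_pmf)
  have "\<bar>f (x # xs) - f (y # xs)\<bar> \<le> c" if "xs \<in> set_pmf (seq_pmf ps)" for xs
    using bd x y that by (auto simp: bounded_differences_def)
  then have pointwise: "f (x # xs) \<le> f (y # xs) + c" if "xs \<in> set_pmf (seq_pmf ps)" for xs
    using that by fastforce
  have "measure_pmf.expectation (seq_pmf ps) (\<lambda>xs. f (x # xs))
      \<le> measure_pmf.expectation (seq_pmf ps) (\<lambda>xs. f (y # xs) + c)"
    by (intro integral_mono_AE AE_pmfI int) (simp add: pointwise)
  then show ?thesis by (simp add: int)
qed

lemma Hoeffdings_lemma_pmf:
  fixes g :: "'a \<Rightarrow> real"
  assumes fin: "finite (set_pmf M)" and range: "\<And>x. x \<in> set_pmf M \<Longrightarrow> a \<le> g x \<and> g x \<le> a + c"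
    and l: "l > 0"
  shows "measure_pmf.expectation M (\<lambda>x. exp (l * (g x - measure_pmf.expectation M g)))
       \<le> exp (l\<^sup>2 * c\<^sup>2 / 8)"
proof -
  have "interval_bounded_random_variable (measure_pmf M) g a (a + c)"
    unfolding interval_bounded_random_variable_def interval_bounded_random_variable_axioms_def
    using prob_space_measure_pmf range by (auto intro!: AE_pmfI)
  from interval_bounded_random_variable.Hoeffdings_lemma_nn_integral[OF this l]
  have "(\<integral>\<^sup>+ x. ennreal (exp (l * (g x - measure_pmf.expectation M g))) \<partial>measure_pmf M)
        \<le> ennreal (exp (l\<^sup>2 * c\<^sup>2 / 8))" by simp
  also have "(\<integral>\<^sup>+ x. ennreal (exp (l * (g x - measure_pmf.expectation M g))) \<partial>measure_pmf M)
     = ennreal (measure_pmf.expectation M (\<lambda>x. exp (l * (g x - measure_pmf.expectation M g))))"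
    by (rule nn_integral_eq_integral) (auto simp: integrable_measure_pmf_finite[OF fin])
  finally show ?thesis by (simp add: ennreal_le_iff)
qed

text \<open>Azuma--Hoeffding: expose the coordinates one at a time. Given the first coordinate,
  the remaining fluctuation is controlled by induction, and the conditional mean varies in
  an interval of length \<open>c\<close>, so Hoeffding's lemma bounds the first factor.\<close>

lemma mgf_bounded_differences:
  fixes f :: "'a list \<Rightarrow> real"
  assumes "\<And>p. p \<in> set ps \<Longrightarrow> finite (set_pmf p)" and "bounded_differences c ps f"
    and "l > 0" and "c \<ge> 0"
  shows "measure_pmf.expectation (seq_pmf ps)
           (\<lambda>xs. exp (l * (f xs - measure_pmf.expectation (seq_pmf ps) f)))
         \<le> exp (l\<^sup>2 * real (length ps) * c\<^sup>2 / 8)"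
  using assms
proof (induction ps arbitrary: f)
  case Nil
  then show ?case by simp
next
  case (Cons p ps)
  define P where "P = seq_pmf ps"
  define g where "g x = measure_pmf.expectation P (\<lambda>xs. f (x # xs))" for x
  define \<mu> where "\<mu> = measure_pmf.expectation (seq_pmf (p # ps)) f"
  define Q where "Q = exp (l\<^sup>2 * real (length ps) * c\<^sup>2 / 8)"
  have finp: "finite (set_pmf p)" and fin: "\<And>q. q \<in> set ps \<Longrightarrow> finite (set_pmf q)"
    using Cons.prems(1) by auto
  have \<mu>: "\<mu> = measure_pmf.expectation p g"
    unfolding \<mu>_def g_def P_def by (rule expectation_seq_pmf_Cons[OF Cons.prems(1)])
  have inner: "measure_pmf.expectation P (\<lambda>xs. exp (l * (f (x # xs) - \<mu>))) \<le> exp (l * (g x - \<mu>)) * Q"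
    if x: "x \<in> set_pmf p" for x
  proof -
    have "measure_pmf.expectation P (\<lambda>xs. exp (l * (f (x # xs) - \<mu>)))
        = measure_pmf.expectation P (\<lambda>xs. exp (l * (g x - \<mu>)) * exp (l * (f (x # xs) - g x)))"
      by (intro Bochner_Integration.integral_cong refl) (simp add: exp_add[symmetric] algebra_simps)
    also have "\<dots> = exp (l * (g x - \<mu>)) * measure_pmf.expectation P (\<lambda>xs. exp (l * (f (x # xs) - g x)))"
      by simp
    also have "\<dots> \<le> exp (l * (g x - \<mu>)) * Q"
      using Cons.IH[OF fin bounded_differences_Cons[OF Cons.prems(2) x] Cons.prems(3,4)]
      by (intro mult_left_mono) (auto simp: P_def g_def Q_def)
    finally show ?thesis .
  qed
  have "Min (g ` set_pmf p) \<in> g ` set_pmf p"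
    using finp set_pmf_not_empty by (intro Min_in) auto
  then obtain x0 where x0: "x0 \<in> set_pmf p" "g x0 = Min (g ` set_pmf p)" by auto
  have range: "g x0 \<le> g x \<and> g x \<le> g x0 + c" if x: "x \<in> set_pmf p" for x
  proof
    show "g x0 \<le> g x" unfolding x0(2) using finp x by (intro Min_le) auto
    show "g x \<le> g x0 + c"
      unfolding g_def P_def by (rule expectation_Cons_le[OF fin Cons.prems(2) x x0(1)])
  qed
  have "measure_pmf.expectation (seq_pmf (p # ps)) (\<lambda>xs. exp (l * (f xs - \<mu>)))
      = measure_pmf.expectation p (\<lambda>x. measure_pmf.expectation P (\<lambda>xs. exp (l * (f (x # xs) - \<mu>))))"
    unfolding P_def by (rule expectation_seq_pmf_Cons[OF Cons.prems(1)])
  also have "\<dots> \<le> measure_pmf.expectation p (\<lambda>x. exp (l * (g x - \<mu>)) * Q)"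
    by (intro integral_mono_AE AE_pmfI) (auto simp: integrable_measure_pmf_finite[OF finp] inner)
  also have "\<dots> = measure_pmf.expectation p (\<lambda>x. exp (l * (g x - \<mu>))) * Q" by simp
  also have "\<dots> \<le> exp (l\<^sup>2 * c\<^sup>2 / 8) * Q"
    using Hoeffdings_lemma_pmf[OF finp range Cons.prems(3)] by (intro mult_right_mono) (auto simp: \<mu> Q_def)
  also have "\<dots> = exp (l\<^sup>2 * real (length (p # ps)) * c\<^sup>2 / 8)"
    by (simp add: Q_def exp_add[symmetric] algebra_simps add_divide_distrib)
  finally show ?case by (simp add: \<mu>_def)
qed

lemma prob_ge_le_exp_moment:
  fixes F :: "'a \<Rightarrow> real"
  assumes "finite (set_pmf M)" and "h > 0"
  shows "measure_pmf.prob M {x. F x \<ge> l} \<le> exp (- h * l) * measure_pmf.expectation M (\<lambda>x. exp (h * F x))"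
  using measure_pmf.Chernoff_ineq_ge[where s = h and A = UNIV and f = F and a = l and M = M] assms
  by (simp add: set_lebesgue_integral_def set_integrable_def integrable_measure_pmf_finite)

lemma bounded_differences_tail:
  assumes fin: "\<And>p. p \<in> set ps \<Longrightarrow> finite (set_pmf p)" and bd: "bounded_differences c ps f"
    and c: "c > 0" and n: "ps \<noteq> []" and l: "l > 0"
  shows "measure_pmf.prob (seq_pmf ps) {xs. f xs - measure_pmf.expectation (seq_pmf ps) f \<ge> l}
       \<le> exp (- 2 * l\<^sup>2 / (real (length ps) * c\<^sup>2))"
proof -
  define m where "m = real (length ps)"
  define \<mu> where "\<mu> = measure_pmf.expectation (seq_pmf ps) f"
  define h where "h = 4 * l / (m * c\<^sup>2)"
  have m: "m > 0" using n by (simp add: m_def)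
  have h: "h > 0" using l c m by (simp add: h_def)
  have "measure_pmf.prob (seq_pmf ps) {xs. f xs - \<mu> \<ge> l}
      \<le> exp (- h * l) * measure_pmf.expectation (seq_pmf ps) (\<lambda>xs. exp (h * (f xs - \<mu>)))"
    by (rule prob_ge_le_exp_moment[OF finite_set_pmf_seq_pmf[OF fin] h])
  also have "\<dots> \<le> exp (- h * l) * exp (h\<^sup>2 * m * c\<^sup>2 / 8)"
    using mgf_bounded_differences[OF fin bd h] c by (intro mult_left_mono) (auto simp: m_def \<mu>_def)
  also have "\<dots> = exp (- h * l + h\<^sup>2 * m * c\<^sup>2 / 8)" by (simp add: mult_exp_exp)
  also have "- h * l + h\<^sup>2 * m * c\<^sup>2 / 8 = - 2 * l\<^sup>2 / (m * c\<^sup>2)"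
    using m c by (simp add: h_def field_simps power2_eq_square)
  finally show ?thesis by (simp add: m_def \<mu>_def)
qed

theorem McDiarmid_inequality:
  assumes fin: "\<And>p. p \<in> set ps \<Longrightarrow> finite (set_pmf p)" and bd: "bounded_differences c ps f"
    and c: "c > 0" and n: "ps \<noteq> []" and l: "l > 0"
  shows "measure_pmf.prob (seq_pmf ps) {xs. \<bar>f xs - measure_pmf.expectation (seq_pmf ps) f\<bar> \<ge> l}
       \<le> 2 * exp (- 2 * l\<^sup>2 / (real (length ps) * c\<^sup>2))"
proof -
  define M where "M = measure_pmf (seq_pmf ps)"
  define \<mu> where "\<mu> = measure_pmf.expectation (seq_pmf ps) f"
  define B where "B = exp (- 2 * l\<^sup>2 / (real (length ps) * c\<^sup>2))"
  have "bounded_differences c ps (\<lambda>xs. - f xs)"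
    using bd by (auto simp: bounded_differences_def abs_minus_commute)
  from bounded_differences_tail[OF fin this c n l]
  have lower: "measure M {xs. - f xs + \<mu> \<ge> l} \<le> B" by (simp add: M_def \<mu>_def B_def)
  have upper: "measure M {xs. f xs - \<mu> \<ge> l} \<le> B"
    using bounded_differences_tail[OF fin bd c n l] by (simp add: M_def \<mu>_def B_def)
  have "measure M {xs. \<bar>f xs - \<mu>\<bar> \<ge> l} \<le> measure M ({xs. f xs - \<mu> \<ge> l} \<union> {xs. - f xs + \<mu> \<ge> l})"
    unfolding M_def by (intro measure_pmf.finite_measure_mono) auto
  also have "\<dots> \<le> measure M {xs. f xs - \<mu> \<ge> l} + measure M {xs. - f xs + \<mu> \<ge> l}"
    unfolding M_def by (rule measure_subadditive) (auto simp: measure_pmf.emeasure_eq_measure)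
  finally show ?thesis using lower upper by (simp add: M_def \<mu>_def B_def)
qed

section \<open>Invariants of the insertion process\<close>

definition face_verts :: "nat \<times> nat \<times> nat \<Rightarrow> nat set" where
  "face_verts f = (case f of (a, b, c) \<Rightarrow> {a, b, c})"

definition distinct_face :: "nat \<times> nat \<times> nat \<Rightarrow> bool" where
  "distinct_face f = (case f of (a, b, c) \<Rightarrow> a \<noteq> b \<and> a \<noteq> c \<and> b \<noteq> c)"

definition face_count :: "ran_state \<Rightarrow> nat \<Rightarrow> nat" where
  "face_count s u = sum_list (map (\<lambda>f. of_bool (u \<in> face_verts f)) (faces s))"

text \<open>The unbounded outer face is not recorded in \<open>faces\<close>; it accounts for the extra
  edge at each of the three outer vertices \<open>0, 1, 2\<close>.\<close>

definition ran_wf :: "ran_state \<Rightarrow> bool" where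
  "ran_wf s \<longleftrightarrow> finite (edges s) \<and> (\<forall>e\<in>edges s. \<forall>u\<in>e. u < nverts s)
    \<and> (\<forall>f\<in>set (faces s). distinct_face f \<and> (\<forall>u\<in>face_verts f. u < nverts s))
    \<and> nverts s \<ge> 3 \<and> length (faces s) = 2 * nverts s - 5
    \<and> (\<forall>u<nverts s. degree s u = face_count s u + of_bool (u < 3))
    \<and> (\<forall>u. 3 \<le> u \<and> u < nverts s \<longrightarrow> degree s u \<ge> 3)"

lemma ran_insert_eq:
  assumes "faces s ! i = (a, b, c)"
  shows "ran_insert s i = \<lparr> nverts = Suc (nverts s),
          faces = (faces s)[i := (a, b, nverts s)] @ [(a, nverts s, c), (nverts s, b, c)],
          edges = edges s \<union> {{a, nverts s}, {b, nverts s}, {c, nverts s}} \<rparr>"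
  using assms by (simp add: ran_insert_def Let_def)

lemma nverts_ran_insert [simp]: "nverts (ran_insert s i) = Suc (nverts s)"
  by (cases "faces s ! i") (simp add: ran_insert_eq)

lemma length_faces_ran_insert [simp]:
  "i < length (faces s) \<Longrightarrow> length (faces (ran_insert s i)) = length (faces s) + 2"
  by (cases "faces s ! i") (simp add: ran_insert_eq)

lemma ran_wf_face:
  assumes "ran_wf s" "i < length (faces s)" "faces s ! i = (a, b, c)"
  shows "a \<noteq> b" "a \<noteq> c" "b \<noteq> c" "a < nverts s" "b < nverts s" "c < nverts s"
proof -
  have "(a, b, c) \<in> set (faces s)" using assms(2,3) by (metis nth_mem)
  then show "a \<noteq> b" "a \<noteq> c" "b \<noteq> c" "a < nverts s" "b < nverts s" "c < nverts s"
    using assms(1) by (auto simp: ran_wf_def distinct_face_def face_verts_def)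
qed

lemma degree_ran_insert:
  assumes wf: "ran_wf s" and i: "i < length (faces s)"
  shows "degree (ran_insert s i) u =
     (if u = nverts s then 3 else degree s u + of_bool (u \<in> face_verts (faces s ! i)))"
proof -
  obtain a b c where abc: "faces s ! i = (a, b, c)" by (metis prod_cases3)
  define v where "v = nverts s"
  note face = ran_wf_face[OF wf i abc, folded v_def]
  have fin: "finite (edges s)" and old: "\<forall>e\<in>edges s. \<forall>u\<in>e. u < v"
    using wf by (auto simp: ran_wf_def v_def)
  define N where "N = {{a, v}, {b, v}, {c, v}}"
  have edges: "edges (ran_insert s i) = edges s \<union> N"
    using abc by (simp add: ran_insert_eq N_def v_def)
  have disjoint: "edges s \<inter> N = {}" using old by (auto simp: N_def)
  have "{e \<in> edges s \<union> N. u \<in> e} = {e \<in> edges s. u \<in> e} \<union> {e \<in> N. u \<in> e}" by auto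
  then have split: "degree (ran_insert s i) u = degree s u + card {e \<in> N. u \<in> e}"
    unfolding degree_def edges
    by (simp only:) (rule card_Un_disjoint, use fin disjoint in \<open>auto simp: N_def\<close>)
  show ?thesis
  proof (cases "u = v")
    case True
    have "degree s u = 0" using old True by (auto simp: degree_def card_eq_0_iff)
    moreover have "{e \<in> N. u \<in> e} = N" using True by (auto simp: N_def)
    moreover have "card N = 3" using face by (auto simp: N_def doubleton_eq_iff)
    ultimately show ?thesis using split True v_def by simp
  next
    case False
    then have "{e \<in> N. u \<in> e} = (if u \<in> {a, b, c} then {{u, v}} else {})"
      by (auto simp: N_def)
    then show ?thesis using split False by (simp add: abc face_verts_def v_def)
  qed
qed

lemma face_count_ran_insert:
  assumes wf: "ran_wf s" and i: "i < length (faces s)"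
  shows "face_count (ran_insert s i) u =
     (if u = nverts s then 3 else face_count s u + of_bool (u \<in> face_verts (faces s ! i)))"
proof -
  obtain a b c where abc: "faces s ! i = (a, b, c)" by (metis prod_cases3)
  define v where "v = nverts s"
  define ind where "ind = (\<lambda>f. of_bool (u \<in> face_verts f) :: nat)"
  note face = ran_wf_face[OF wf i abc, folded v_def]
  have count: "face_count s u = sum_list (map ind (faces s))"
    by (simp add: face_count_def ind_def)
  have "face_count (ran_insert s i) u = sum_list ((map ind (faces s))[i := ind (a, b, v)])
        + ind (a, v, c) + ind (v, b, c)"
    by (simp add: face_count_def ran_insert_eq[OF abc] v_def map_update ind_def)
  also have "sum_list ((map ind (faces s))[i := ind (a, b, v)])
      = face_count s u + ind (a, b, v) - ind (a, b, c)"
    using i abc by (simp add: sum_list_update count)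
  finally have eq: "face_count (ran_insert s i) u
      = face_count s u + ind (a, b, v) - ind (a, b, c) + ind (a, v, c) + ind (v, b, c)" .
  have "ind (a, b, c) = map ind (faces s) ! i" using i abc by simp
  also have "\<dots> \<le> face_count s u" unfolding count using i by (intro elem_le_sum_list) simp
  finally have le: "ind (a, b, c) \<le> face_count s u" .
  show ?thesis
  proof (cases "u = v")
    case True
    have "\<forall>f\<in>set (faces s). u \<notin> face_verts f" using wf True by (auto simp: ran_wf_def v_def)
    then have "face_count s u = 0" by (simp add: face_count_def sum_list_eq_0_iff)
    then show ?thesis using eq True face by (simp add: ind_def face_verts_def v_def)
  next
    case False
    then show ?thesis using eq le face abc by (auto simp: ind_def face_verts_def v_def)
  qed
qed

lemma ran_wf_ran_insert:
  assumes wf: "ran_wf s" and i: "i < length (faces s)"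
  shows "ran_wf (ran_insert s i)"
proof -
  obtain a b c where abc: "faces s ! i = (a, b, c)" by (metis prod_cases3)
  define v where "v = nverts s"
  note face = ran_wf_face[OF wf i abc, folded v_def]
  have edges_ok: "finite (edges s)" "\<forall>e\<in>edges s. \<forall>u\<in>e. u < v"
    and faces_ok: "\<forall>f\<in>set (faces s). distinct_face f \<and> (\<forall>u\<in>face_verts f. u < v)"
    and size: "v \<ge> 3" "length (faces s) = 2 * v - 5"
    and degrees: "\<forall>u<v. degree s u = face_count s u + of_bool (u < 3)"
    and inner_degrees: "\<forall>u. 3 \<le> u \<and> u < v \<longrightarrow> degree s u \<ge> 3"
    using wf unfolding ran_wf_def v_def by blast+
  have new: "ran_insert s i = \<lparr> nverts = Suc v,
          faces = (faces s)[i := (a, b, v)] @ [(a, v, c), (v, b, c)],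
          edges = edges s \<union> {{a, v}, {b, v}, {c, v}} \<rparr>"
    using ran_insert_eq[OF abc] v_def by simp
  have "\<forall>f\<in>set (faces (ran_insert s i)). distinct_face f \<and> (\<forall>u\<in>face_verts f. u < Suc v)"
  proof
    fix f assume "f \<in> set (faces (ran_insert s i))"
    then have "f \<in> set (faces s) \<or> f = (a, b, v) \<or> f = (a, v, c) \<or> f = (v, b, c)"
      unfolding new using set_update_subset_insert by fastforce
    then show "distinct_face f \<and> (\<forall>u\<in>face_verts f. u < Suc v)"
      using faces_ok face by (fastforce simp: distinct_face_def face_verts_def less_Suc_eq)
  qed
  moreover have "\<forall>u<Suc v. degree (ran_insert s i) u = face_count (ran_insert s i) u + of_bool (u < 3)"
    using degrees size by (auto simp: degree_ran_insert[OF wf i] face_count_ran_insert[OF wf i]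
        v_def less_Suc_eq)
  moreover have "\<forall>u. 3 \<le> u \<and> u < Suc v \<longrightarrow> degree (ran_insert s i) u \<ge> 3"
    using inner_degrees by (auto simp: degree_ran_insert[OF wf i] v_def less_Suc_eq)
  moreover have "\<forall>e\<in>edges (ran_insert s i). \<forall>u\<in>e. u < Suc v"
    using edges_ok face by (auto simp: new less_Suc_eq)
  ultimately show ?thesis
    using edges_ok size i unfolding ran_wf_def by (simp add: new)
qed

lemma degree_ran_init: "u < 3 \<Longrightarrow> degree ran_init u = 2"
proof -
  assume "u < 3"
  then have "u = 0 \<or> u = 1 \<or> u = 2" by auto
  moreover have "{e \<in> {{0, 1}, {1, 2}, {0, 2 :: nat}}. 0 \<in> e} = {{0, 1}, {0, 2}}"
    "{e \<in> {{0, 1}, {1, 2}, {0, 2 :: nat}}. 1 \<in> e} = {{0, 1}, {1, 2}}"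
    "{e \<in> {{0, 1}, {1, 2}, {0, 2 :: nat}}. 2 \<in> e} = {{1, 2}, {0, 2}}" by auto
  moreover have "card {{0, 1}, {0, 2 :: nat}} = 2" "card {{0, 1}, {1, 2 :: nat}} = 2"
    "card {{1, 2}, {0, 2 :: nat}} = 2"
    by (simp_all add: doubleton_eq_iff)
  ultimately show ?thesis unfolding degree_def ran_init_def by (elim disjE) simp_all
qed

lemma ran_wf_ran_init: "ran_wf ran_init"
proof -
  have "face_count ran_init u = 1" if "u < 3" for u
    using that by (auto simp: face_count_def ran_init_def face_verts_def)
  moreover have "\<forall>e\<in>edges ran_init. \<forall>u\<in>e. u < nverts ran_init" by (auto simp: ran_init_def)
  ultimately show ?thesis
    using degree_ran_init unfolding ran_wf_def
    by (auto simp: ran_init_def distinct_face_def face_verts_def)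
qed

section \<open>The expected degree counts\<close>

definition outer_degree_count :: "nat \<Rightarrow> ran_state \<Rightarrow> real" where
  "outer_degree_count j s = (\<Sum>u<3. of_bool (degree s u = j))"

lemma Z_eq_sum: "real (Z k s) = (\<Sum>u<nverts s. of_bool (degree s u = k))"
proof -
  have "{v. v < nverts s \<and> degree s v = k} = {..<nverts s} \<inter> {u. degree s u = k}" by auto
  then have "real (Z k s) = (\<Sum>u\<in>{..<nverts s} \<inter> {u. degree s u = k}. 1)"
    by (simp add: Z_def)
  also have "\<dots> = (\<Sum>u<nverts s. of_bool (degree s u = k))"
    by (subst sum.inter_restrict) (auto simp: of_bool_def intro!: sum.cong)
  finally show ?thesis .
qed

lemma face_count_eq_sum:
  "real (face_count s u) = (\<Sum>i<length (faces s). of_bool (u \<in> face_verts (faces s ! i)))"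
  by (simp add: face_count_def sum_list_sum_nth atLeast0LessThan)

lemma sum_face_count_of_degree:
  assumes wf: "ran_wf s"
  shows "(\<Sum>u<nverts s. of_bool (degree s u = j) * real (face_count s u))
       = j * real (Z j s) - outer_degree_count j s"
proof -
  have n3: "nverts s \<ge> 3"
    and deg: "\<And>u. u < nverts s \<Longrightarrow> degree s u = face_count s u + of_bool (u < 3)"
    using wf by (auto simp: ran_wf_def)
  have "(\<Sum>u<nverts s. of_bool (degree s u = j) * real (face_count s u))
      = (\<Sum>u<nverts s. real j * of_bool (degree s u = j) - of_bool (u < 3) * of_bool (degree s u = j))"
    by (intro sum.cong refl) (auto simp: deg)
  also have "\<dots> = real j * real (Z j s) - (\<Sum>u<nverts s. of_bool (u < 3) * of_bool (degree s u = j))"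
    by (simp add: Z_eq_sum sum_subtractf sum_distrib_left)
  also have "(\<Sum>u<nverts s. of_bool (u < 3) * of_bool (degree s u = j)) = outer_degree_count j s"
    using n3 unfolding outer_degree_count_def
    by (intro sum.mono_neutral_cong_right) auto
  finally show ?thesis .
qed

lemma Z_ran_insert:
  assumes wf: "ran_wf s" and i: "i < length (faces s)" and k: "k \<ge> 3"
  shows "real (Z k (ran_insert s i)) = of_bool (k = 3) +
     (\<Sum>u<nverts s. (of_bool (degree s u = k) :: real)
        - of_bool (u \<in> face_verts (faces s ! i)) * of_bool (degree s u = k)
        + of_bool (u \<in> face_verts (faces s ! i)) * of_bool (degree s u = k - 1))"
proof -
  have "real (Z k (ran_insert s i))
      = (\<Sum>u<nverts s. of_bool (degree (ran_insert s i) u = k)) + of_bool (k = 3)"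
    by (simp add: Z_eq_sum degree_ran_insert[OF wf i] eq_commute)
  also have "(\<Sum>u<nverts s. of_bool (degree (ran_insert s i) u = k))
      = (\<Sum>u<nverts s. (of_bool (degree s u = k) :: real)
        - of_bool (u \<in> face_verts (faces s ! i)) * of_bool (degree s u = k)
        + of_bool (u \<in> face_verts (faces s ! i)) * of_bool (degree s u = k - 1))"
    using k by (intro sum.cong refl) (auto simp: degree_ran_insert[OF wf i] of_bool_def)
  finally show ?thesis by simp
qed

lemma sum_Z_ran_insert:
  assumes wf: "ran_wf s" and k: "k \<ge> 3"
  shows "(\<Sum>i<length (faces s). real (Z k (ran_insert s i))) =
     length (faces s) * (real (Z k s) + of_bool (k = 3))
     - (k * real (Z k s) - outer_degree_count k s)
     + ((real k - 1) * real (Z (k - 1) s) - outer_degree_count (k - 1) s)"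
proof -
  define F where "F = length (faces s)"
  define n where "n = nverts s"
  define inc where "inc u i = (of_bool (u \<in> face_verts (faces s ! i)) :: real)" for u i
  define deg where "deg j u = (of_bool (degree s u = j) :: real)" for j u
  have "(\<Sum>i<F. real (Z k (ran_insert s i)))
      = (\<Sum>i<F. of_bool (k = 3) + (\<Sum>u<n. deg k u) - (\<Sum>u<n. inc u i * deg k u)
          + (\<Sum>u<n. inc u i * deg (k - 1) u))"
    by (intro sum.cong refl)
      (simp add: Z_ran_insert[OF wf _ k] F_def n_def inc_def deg_def sum.distrib sum_subtractf)
  also have "\<dots> = F * (of_bool (k = 3) + (\<Sum>u<n. deg k u))
       - (\<Sum>u<n. deg k u * (\<Sum>i<F. inc u i)) + (\<Sum>u<n. deg (k - 1) u * (\<Sum>i<F. inc u i))"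
  proof -
    have swap: "(\<Sum>i<F. \<Sum>u<n. inc u i * g u) = (\<Sum>u<n. g u * (\<Sum>i<F. inc u i))" for g
      by (subst sum.swap) (simp add: sum_distrib_left mult.commute)
    show ?thesis by (simp add: sum.distrib sum_subtractf swap)
  qed
  also have "\<dots> = F * (of_bool (k = 3) + real (Z k s))
       - (k * real (Z k s) - outer_degree_count k s)
       + ((k - 1) * real (Z (k - 1) s) - outer_degree_count (k - 1) s)"
    using sum_face_count_of_degree[OF wf, of k] sum_face_count_of_degree[OF wf, of "k - 1"]
    by (simp add: face_count_eq_sum Z_eq_sum F_def n_def inc_def deg_def)
  finally show ?thesis using k by (simp add: F_def algebra_simps of_nat_diff)
qed

lemma length_faces_pos: "ran_wf s \<Longrightarrow> 0 < length (faces s)"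
  by (simp add: ran_wf_def)

lemma set_pmf_ran_step:
  "ran_wf s \<Longrightarrow> set_pmf (ran_step s) = ran_insert s ` {..<length (faces s)}"
  unfolding ran_step_def by (subst set_map_pmf, subst set_pmf_of_set) (auto dest: length_faces_pos)

lemma RAN_support:
  "finite (set_pmf (RAN t)) \<and> (\<forall>s\<in>set_pmf (RAN t). ran_wf s \<and> nverts s = t + 3)"
proof (induction t)
  case 0
  then show ?case using ran_wf_ran_init by (simp add: ran_init_def)
next
  case (Suc t)
  then have "set_pmf (RAN (Suc t)) = (\<Union>s\<in>set_pmf (RAN t). ran_insert s ` {..<length (faces s)})"
    by (simp add: set_pmf_ran_step)
  with Suc show ?case by (auto intro: ran_wf_ran_insert)
qed

lemma finite_set_pmf_RAN: "finite (set_pmf (RAN t))"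
  using RAN_support by blast

lemma ran_wf_RAN: "s \<in> set_pmf (RAN t) \<Longrightarrow> ran_wf s"
  using RAN_support by blast

lemma length_faces_RAN: "s \<in> set_pmf (RAN t) \<Longrightarrow> length (faces s) = 2 * t + 1"
  using RAN_support by (fastforce simp: ran_wf_def)

lemma expectation_ran_step:
  "ran_wf s \<Longrightarrow> measure_pmf.expectation (ran_step s) f
     = (\<Sum>i<length (faces s). f (ran_insert s i)) / length (faces s)"
  unfolding ran_step_def integral_map_pmf
  by (subst integral_pmf_of_set) (auto dest: length_faces_pos)

definition mean_Z :: "nat \<Rightarrow> nat \<Rightarrow> real" where
  "mean_Z k t = measure_pmf.expectation (RAN t) (\<lambda>s. real (Z k s))"

definition mean_outer :: "nat \<Rightarrow> nat \<Rightarrow> real" where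
  "mean_outer k t = measure_pmf.expectation (RAN t) (outer_degree_count k)"

lemma mean_Z_Suc:
  assumes k: "k \<ge> 3"
  shows "mean_Z k (Suc t) = mean_Z k t + of_bool (k = 3)
      - (k * mean_Z k t - mean_outer k t) / (2 * real t + 1)
      + ((real k - 1) * mean_Z (k - 1) t - mean_outer (k - 1) t) / (2 * real t + 1)"
proof -
  have "mean_Z k (Suc t)
      = measure_pmf.expectation (RAN t) (\<lambda>s. measure_pmf.expectation (ran_step s) (\<lambda>s. real (Z k s)))"
    unfolding mean_Z_def RAN.simps
    by (rule expectation_bind_pmf_finite[OF finite_set_pmf_RAN])
      (simp add: ran_wf_RAN set_pmf_ran_step)
  also have "\<dots> = measure_pmf.expectation (RAN t)
     (\<lambda>s. real (Z k s) + of_bool (k = 3) - (k * real (Z k s) - outer_degree_count k s) / (2 * real t + 1)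
          + ((real k - 1) * real (Z (k - 1) s) - outer_degree_count (k - 1) s) / (2 * real t + 1))"
  proof (intro integral_cong_AE AE_pmfI)
    fix s assume s: "s \<in> set_pmf (RAN t)"
    have F: "real (length (faces s)) = 2 * real t + 1" using length_faces_RAN[OF s] by simp
    have "(F * (z + c) - a + b) / F = z + c - a / F + b / F" if "F > 0" for F z c a b :: real
      using that by (simp add: field_simps)
    from this[of "2 * real t + 1"] show "measure_pmf.expectation (ran_step s) (\<lambda>s. real (Z k s)) =
       real (Z k s) + of_bool (k = 3) - (k * real (Z k s) - outer_degree_count k s) / (2 * real t + 1)
          + ((real k - 1) * real (Z (k - 1) s) - outer_degree_count (k - 1) s) / (2 * real t + 1)"
      unfolding expectation_ran_step[OF ran_wf_RAN[OF s]] sum_Z_ran_insert[OF ran_wf_RAN[OF s] k] F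
      by simp
  qed simp_all
  also have "\<dots> = mean_Z k t + of_bool (k = 3)
      - (k * mean_Z k t - mean_outer k t) / (2 * real t + 1)
      + ((real k - 1) * mean_Z (k - 1) t - mean_outer (k - 1) t) / (2 * real t + 1)"
    unfolding mean_Z_def mean_outer_def
    by (simp add: integrable_measure_pmf_finite[OF finite_set_pmf_RAN] diff_divide_distrib)
  finally show ?thesis .
qed

section \<open>Linear growth of the expected degree counts\<close>

text \<open>The weight \<open>d t\<^sup>2 * t\<close> is nonincreasing, because
  \<open>(2 t / (2 t + 1))\<^sup>2 (t + 1) \<le> t\<close>.\<close>

lemma decay_tendsto_zero:
  fixes d :: "nat \<Rightarrow> real"
  assumes nonneg: "\<And>t. d t \<ge> 0"
    and decay: "\<And>t. t \<ge> T \<Longrightarrow> d (Suc t) \<le> d t * (2 * real t / (2 * real t + 1))"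
  shows "d \<longlonglongrightarrow> 0"
proof -
  define C where "C = d T ^ 2 * T"
  have weight: "d t ^ 2 * t \<le> C" if "t \<ge> T" for t
    using that
  proof (induction t rule: dec_induct)
    case base
    then show ?case by (simp add: C_def)
  next
    case (step t)
    let ?q = "2 * real t / (2 * real t + 1)"
    have "?q ^ 2 * (real t + 1) = (2 * real t) ^ 2 * (real t + 1) / (2 * real t + 1) ^ 2"
      by (simp add: power_divide)
    also have "\<dots> \<le> t"
      by (subst pos_divide_le_eq) (simp, simp add: power2_eq_square algebra_simps)
    finally have q: "?q ^ 2 * (real t + 1) \<le> t" .
    have "d (Suc t) ^ 2 \<le> (d t * ?q) ^ 2"
      using decay[OF step(1)] nonneg by (intro power_mono) auto
    then have "d (Suc t) ^ 2 * (real t + 1) \<le> (d t * ?q) ^ 2 * (real t + 1)"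
      by (intro mult_right_mono) auto
    also have "\<dots> = d t ^ 2 * (?q ^ 2 * (real t + 1))" by (simp only: power_mult_distrib mult.assoc)
    also have "\<dots> \<le> d t ^ 2 * t" using q by (intro mult_left_mono) auto
    finally show ?case using step by (simp add: add.commute)
  qed
  have upper: "eventually (\<lambda>t. d t \<le> sqrt (C / real t)) sequentially"
    using eventually_ge_at_top[of "max T 1"]
  proof eventually_elim
    case (elim t)
    then have "d t ^ 2 \<le> C / real t" using weight[of t] by (simp add: pos_le_divide_eq)
    then show ?case using nonneg[of t] by (simp add: real_le_rsqrt)
  qed
  have lim: "(\<lambda>t. sqrt (C / real t)) \<longlonglongrightarrow> 0"
    using tendsto_real_sqrt[OF lim_const_over_n[of C]] by simp
  have lower: "eventually (\<lambda>t. 0 \<le> d t) sequentially" using nonneg by simp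
  show ?thesis by (rule tendsto_sandwich[OF lower upper tendsto_const lim])
qed

lemma eventually_abs_le_of_recurrence:
  fixes e h :: "nat \<Rightarrow> real"
  assumes K: "K \<ge> 1"
    and rec: "\<And>t. e (Suc t) = e t * (1 - K / (2 * real t + 1)) + h t / (2 * real t + 1)"
    and forcing: "eventually (\<lambda>t. \<bar>h t\<bar> \<le> K * B) sequentially"
    and eta: "\<eta> > 0"
  shows "eventually (\<lambda>t. \<bar>e t\<bar> \<le> B + \<eta>) sequentially"
proof -
  obtain T1 where T1: "\<And>t. t \<ge> T1 \<Longrightarrow> \<bar>h t\<bar> \<le> K * B"
    using forcing by (auto simp: eventually_sequentially)
  define T where "T = max T1 (nat \<lceil>K\<rceil>)"
  have T: "\<bar>h t\<bar> \<le> K * B \<and> K \<le> 2 * real t + 1" if "t \<ge> T" for t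
  proof -
    have "K \<le> real (nat \<lceil>K\<rceil>)" by (rule real_nat_ceiling_ge)
    also have "\<dots> \<le> real t" using that by (simp add: T_def)
    finally show ?thesis using that T1 by (simp add: T_def)
  qed
  define d where "d t = max (\<bar>e t\<bar> - B) 0" for t
  have "d (Suc t) \<le> d t * (2 * real t / (2 * real t + 1))" if t: "t \<ge> T" for t
  proof -
    define F where "F = 2 * real t + 1"
    have F: "F > 0" "K \<le> F" using T[OF t] by (auto simp: F_def)
    have "K / F \<le> 1" using F by simp
    moreover have "1 / F \<le> K / F" using K F by (intro divide_right_mono) auto
    moreover have "2 * real t / (2 * real t + 1) = 1 - 1 / F" by (simp add: F_def field_simps)
    ultimately have q: "0 \<le> 1 - K / F" "1 - K / F \<le> 2 * real t / (2 * real t + 1)"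
      by linarith+
    have "\<bar>e (Suc t)\<bar> \<le> \<bar>e t\<bar> * (1 - K / F) + \<bar>h t\<bar> / F"
      unfolding rec F_def[symmetric] using q F
      by (metis abs_divide abs_mult abs_of_nonneg abs_of_pos abs_triangle_ineq)
    also have "\<dots> \<le> \<bar>e t\<bar> * (1 - K / F) + K * B / F"
      using T[OF t] F by (intro add_left_mono divide_right_mono) auto
    finally have "\<bar>e (Suc t)\<bar> - B \<le> (\<bar>e t\<bar> - B) * (1 - K / F)"
      using F by (simp add: field_simps)
    also have "\<dots> \<le> d t * (2 * real t / (2 * real t + 1))"
      using q by (intro mult_mono) (auto simp: d_def)
    finally show ?thesis by (simp add: d_def)
  qed
  then have "d \<longlonglongrightarrow> 0" by (intro decay_tendsto_zero[of _ T]) (auto simp: d_def)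
  then have "eventually (\<lambda>t. d t < \<eta>) sequentially"
    using eta by (auto simp: tendsto_iff dist_real_def d_def)
  then show ?thesis by eventually_elim (simp add: d_def)
qed

text \<open>The limiting density \<open>b\<^sub>k\<close> of vertices of degree \<open>k\<close>; the value \<open>0\<close> below \<open>3\<close>
  makes \<open>degree_density_balance\<close> hold also for \<open>k = 3\<close>.\<close>

definition degree_density :: "nat \<Rightarrow> real" where
  "degree_density k = (if k < 3 then 0 else 24 / (real k * (real k + 1) * (real k + 2)))"

lemma degree_density_balance:
  assumes k: "k \<ge> 3"
  shows "of_bool (k = 3) - degree_density k
       = (real k * degree_density k - (real k - 1) * degree_density (k - 1)) / 2"
proof (cases "k = 3")
  case True
  then show ?thesis by (simp add: degree_density_def)
next
  case False
  define r where "r = real k"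
  have r: "r \<ge> 4" using k False by (simp add: r_def)
  have b': "degree_density (k - 1) = 24 / ((r - 1) * r * (r + 1))"
    using k False by (simp add: degree_density_def r_def of_nat_diff)
  have b: "degree_density k = 24 / (r * (r + 1) * (r + 2))"
    using k by (simp add: degree_density_def r_def)
  have "r - 1 > 0" "r > 0" using r by auto
  then show ?thesis
    using False unfolding b b' r_def[symmetric]
    by (simp add: divide_simps) (simp add: algebra_simps)
qed

definition mean_Z_error :: "nat \<Rightarrow> nat \<Rightarrow> real" where
  "mean_Z_error k t = mean_Z k t - degree_density k * real t"

definition error_forcing :: "nat \<Rightarrow> nat \<Rightarrow> real" where
  "error_forcing k t = (real k - 1) * mean_Z_error (k - 1) t + (mean_outer k t - mean_outer (k - 1) t)
     + (real k * degree_density k - (real k - 1) * degree_density (k - 1)) / 2"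

lemma error_recurrence_algebra:
  fixes F t y x x' c b b' P P' k :: real
  assumes F: "F = 2 * t + 1" "F > 0"
    and y: "y = x + c - (k * x - P) / F + ((k - 1) * x' - P') / F"
    and c: "c - b = (k * b - (k - 1) * b') / 2"
  shows "y - b * (t + 1) = (x - b * t) * (1 - k / F)
           + ((k - 1) * (x' - b' * t) + (P - P') + (k * b - (k - 1) * b') / 2) / F"
proof -
  define R where "R = (k - 1) * (x' - b' * t) + (P - P') + (k * b - (k - 1) * b') / 2"
  have c': "c = b + (k * b - (k - 1) * b') / 2" using c by (simp add: field_simps)
  have t: "t = (F - 1) / 2" using F by simp
  have "(y - b * (t + 1)) * F = (x - b * t) * (F - k) + R"
    unfolding y c' R_def unfolding t using F(2) by (simp add: field_simps)
  then have "y - b * (t + 1) = ((x - b * t) * (F - k) + R) / F"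
    using F(2) by (simp add: eq_divide_eq)
  also have "\<dots> = (x - b * t) * (1 - k / F) + R / F"
    using F(2) by (simp add: add_divide_distrib field_simps)
  finally show ?thesis by (simp add: R_def)
qed

lemma mean_Z_error_Suc:
  assumes k: "k \<ge> 3"
  shows "mean_Z_error k (Suc t)
       = mean_Z_error k t * (1 - real k / (2 * real t + 1)) + error_forcing k t / (2 * real t + 1)"
proof -
  have "mean_Z k (Suc t) - degree_density k * (real t + 1)
      = (mean_Z k t - degree_density k * real t) * (1 - real k / (2 * real t + 1))
        + ((real k - 1) * (mean_Z (k - 1) t - degree_density (k - 1) * real t)
           + (mean_outer k t - mean_outer (k - 1) t)
           + (real k * degree_density k - (real k - 1) * degree_density (k - 1)) / 2)
          / (2 * real t + 1)"
    by (rule error_recurrence_algebra[OF refl _ mean_Z_Suc[OF k] degree_density_balance[OF k]])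
      simp
  then show ?thesis
    unfolding mean_Z_error_def error_forcing_def by (simp add: add.commute)
qed

lemma outer_degree_count_nonneg: "0 \<le> outer_degree_count j s"
  by (simp add: outer_degree_count_def sum_nonneg)

lemma outer_degree_count_add_le:
  assumes "j \<noteq> j'"
  shows "outer_degree_count j s + outer_degree_count j' s \<le> 3"
proof -
  have "outer_degree_count j s + outer_degree_count j' s
      = (\<Sum>u<3. of_bool (degree s u = j) + of_bool (degree s u = j'))"
    by (simp add: outer_degree_count_def sum.distrib)
  also have "\<dots> \<le> (\<Sum>u<(3::nat). 1)" using assms by (intro sum_mono) auto
  finally show ?thesis by simp
qed

lemma mean_outer_bounds:
  assumes "j \<noteq> j'"
  shows "0 \<le> mean_outer j t" "mean_outer j t + mean_outer j' t \<le> 3"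
proof -
  show "0 \<le> mean_outer j t"
    unfolding mean_outer_def by (rule integral_nonneg_AE) (simp add: outer_degree_count_nonneg)
  have "mean_outer j t + mean_outer j' t
      = measure_pmf.expectation (RAN t) (\<lambda>s. outer_degree_count j s + outer_degree_count j' s)"
    unfolding mean_outer_def by (simp add: integrable_measure_pmf_finite[OF finite_set_pmf_RAN])
  also have "\<dots> \<le> measure_pmf.expectation (RAN t) (\<lambda>s. 3)"
    using outer_degree_count_add_le[OF assms]
    by (intro integral_mono) (auto simp: integrable_measure_pmf_finite[OF finite_set_pmf_RAN])
  finally show "mean_outer j t + mean_outer j' t \<le> 3" by simp
qed

lemma Z_2_eq_outer_degree_count:
  assumes wf: "ran_wf s"
  shows "real (Z 2 s) = outer_degree_count 2 s"
proof -
  have "(\<Sum>u<nverts s. of_bool (degree s u = 2)) = (\<Sum>u<3. of_bool (degree s u = 2) :: real)"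
    using wf by (intro sum.mono_neutral_right) (auto simp: ran_wf_def)
  then show ?thesis by (simp add: Z_eq_sum outer_degree_count_def)
qed

lemma mean_Z_2: "mean_Z 2 t = mean_outer 2 t"
  unfolding mean_Z_def mean_outer_def
  by (intro integral_cong_AE AE_pmfI) (auto simp: Z_2_eq_outer_degree_count ran_wf_RAN)

lemma abs_error_forcing_3: "\<bar>error_forcing 3 t\<bar> \<le> 36 / 10"
proof -
  have "error_forcing 3 t = mean_outer 2 t + mean_outer 3 t + 6 / 10"
    by (simp add: error_forcing_def mean_Z_error_def mean_Z_2 degree_density_def)
  then show ?thesis using mean_outer_bounds[of 2 3 t] mean_outer_bounds[of 3 2 t] by linarith
qed

lemma abs_error_forcing_ge_4:
  assumes k: "k \<ge> 4"
  shows "\<bar>error_forcing k t\<bar> \<le> (real k - 1) * \<bar>mean_Z_error (k - 1) t\<bar> + 32 / 10"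
proof -
  have balance: "(real k * degree_density k - (real k - 1) * degree_density (k - 1)) / 2
      = - degree_density k"
    using degree_density_balance[of k] k by simp
  have "4 * 5 * 6 \<le> real k * (real k + 1) * (real k + 2)"
    using k by (intro mult_mono) auto
  then have "0 \<le> degree_density k" "degree_density k \<le> 2 / 10"
    using k by (auto simp: degree_density_def divide_le_eq)
  moreover have "\<bar>mean_outer k t - mean_outer (k - 1) t\<bar> \<le> 3"
    using mean_outer_bounds[of k "k - 1" t] mean_outer_bounds[of "k - 1" k t] k by linarith
  moreover have "\<bar>(real k - 1) * mean_Z_error (k - 1) t\<bar> = (real k - 1) * \<bar>mean_Z_error (k - 1) t\<bar>"
    using k by (simp add: abs_mult)
  ultimately show ?thesis unfolding error_forcing_def balance by linarith
qed

text \<open>The forcing term is at most \<open>3.6 \<le> 3 \<cdot> 3.2\<close> for \<open>k = 3\<close>, and at most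
  \<open>(k - 1) \<cdot> 3.2 + 3.2 = k \<cdot> 3.2\<close> in the limit for \<open>k \<ge> 4\<close>, so the bound \<open>3.2\<close>
  propagates up the degrees.\<close>

lemma eventually_abs_mean_Z_error_le:
  assumes "k \<ge> 3" and "\<eta> > 0"
  shows "eventually (\<lambda>t. \<bar>mean_Z_error k t\<bar> \<le> 32 / 10 + \<eta>) sequentially"
  using assms
proof (induction k arbitrary: \<eta> rule: nat_induct_at_least)
  case base
  have "\<bar>error_forcing 3 t\<bar> \<le> 3 * (32 / 10)" for t
    using abs_error_forcing_3[of t] by simp
  then show ?case
    using mean_Z_error_Suc[of 3] base
    by (intro eventually_abs_le_of_recurrence[where K = 3 and h = "error_forcing 3"]) auto
next
  case (Suc k)
  have "eventually (\<lambda>t. \<bar>mean_Z_error k t\<bar> \<le> 32 / 10 + \<eta> / 2) sequentially"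
    using Suc.IH Suc.prems by simp
  then have "eventually (\<lambda>t. \<bar>error_forcing (Suc k) t\<bar> \<le> real (Suc k) * (32 / 10 + \<eta> / 2)) sequentially"
  proof eventually_elim
    case (elim t)
    have "\<bar>error_forcing (Suc k) t\<bar> \<le> real k * \<bar>mean_Z_error k t\<bar> + 32 / 10"
      using abs_error_forcing_ge_4[of "Suc k" t] Suc.hyps by simp
    also have "\<dots> \<le> real k * (32 / 10 + \<eta> / 2) + 32 / 10"
      using elim by (intro add_right_mono mult_left_mono) auto
    also have "\<dots> \<le> real (Suc k) * (32 / 10 + \<eta> / 2)"
      using Suc.prems by (simp add: distrib_right)
    finally show ?case .
  qed
  then have "eventually (\<lambda>t. \<bar>mean_Z_error (Suc k) t\<bar> \<le> (32 / 10 + \<eta> / 2) + \<eta> / 2) sequentially"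
    using Suc.hyps Suc.prems mean_Z_error_Suc[of "Suc k"]
    by (intro eventually_abs_le_of_recurrence[where K = "real (Suc k)"]) auto
  then show ?case by (simp add: add.commute)
qed

lemma mean_Z_linear:
  assumes "k \<ge> 3"
  shows "\<exists>b::real. \<exists>T::nat. \<forall>t\<ge>T.
           \<bar>measure_pmf.expectation (RAN t) (\<lambda>s. real (Z k s)) - b * real t\<bar> \<le> 3.6"
proof -
  obtain T where "\<And>t. t \<ge> T \<Longrightarrow> \<bar>mean_Z_error k t\<bar> \<le> 32 / 10 + 4 / 10"
    using eventually_abs_mean_Z_error_le[OF assms, of "4 / 10"]
    unfolding eventually_sequentially by auto
  then show ?thesis by (auto simp: mean_Z_error_def mean_Z_def)
qed

section \<open>Concentration of the degree counts\<close>

fun ran_run :: "ran_state \<Rightarrow> nat list \<Rightarrow> ran_state" where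
  "ran_run s [] = s"
| "ran_run s (i # is) = ran_run (ran_insert s i) is"

fun valid_choices :: "nat \<Rightarrow> nat list \<Rightarrow> bool" where
  "valid_choices L [] = True"
| "valid_choices L (i # is) = (i < L \<and> valid_choices (L + 2) is)"

definition vertex_agree :: "nat set \<Rightarrow> nat \<Rightarrow> nat \<Rightarrow> bool" where
  "vertex_agree B u u' \<longleftrightarrow> u = u' \<or> (u \<in> B \<and> u' \<in> B)"

definition face_agree :: "nat set \<Rightarrow> nat \<times> nat \<times> nat \<Rightarrow> nat \<times> nat \<times> nat \<Rightarrow> bool" where
  "face_agree B f f' = (case f of (a, b, c) \<Rightarrow> case f' of (a', b', c') \<Rightarrow>
     vertex_agree B a a' \<and> vertex_agree B b b' \<and> vertex_agree B c c')"

text \<open>Two runs that differ in one choice are coupled by inserting into faces with the same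
  index afterwards. Their faces then differ only at vertices of the finite set \<open>B\<close> of
  vertices touched by the differing step, so later insertions change the degree of a vertex
  outside \<open>B\<close> in both runs alike.\<close>

definition agree_outside :: "nat set \<Rightarrow> ran_state \<Rightarrow> ran_state \<Rightarrow> bool" where
  "agree_outside B X Y \<longleftrightarrow> nverts X = nverts Y \<and> length (faces X) = length (faces Y)
     \<and> ran_wf X \<and> ran_wf Y \<and> finite B
     \<and> (\<forall>p < length (faces X). face_agree B (faces X ! p) (faces Y ! p))
     \<and> (\<forall>u. u \<notin> B \<longrightarrow> degree X u = degree Y u)"

lemma face_agree_face_verts:
  "face_agree B f f' \<Longrightarrow> u \<notin> B \<Longrightarrow> u \<in> face_verts f \<longleftrightarrow> u \<in> face_verts f'"
  by (cases f; cases f') (auto simp: face_agree_def vertex_agree_def face_verts_def)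

lemma agree_outside_ran_insert:
  assumes agree: "agree_outside B X Y" and i: "i < length (faces X)"
  shows "agree_outside B (ran_insert X i) (ran_insert Y i)"
proof -
  obtain a b c where abc: "faces X ! i = (a, b, c)" by (metis prod_cases3)
  obtain a' b' c' where abc': "faces Y ! i = (a', b', c')" by (metis prod_cases3)
  have same: "nverts X = nverts Y" "length (faces X) = length (faces Y)"
    and wf: "ran_wf X" "ran_wf Y" and fin: "finite B"
    and faces: "\<forall>p < length (faces X). face_agree B (faces X ! p) (faces Y ! p)"
    and degrees: "\<forall>u. u \<notin> B \<longrightarrow> degree X u = degree Y u"
    using agree unfolding agree_outside_def by blast+
  define v where "v = nverts X"
  have iY: "i < length (faces Y)" using i same by simp
  have corners: "vertex_agree B a a'" "vertex_agree B b b'" "vertex_agree B c c'"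
    using faces i abc abc' by (auto simp: face_agree_def)
  have FX: "faces (ran_insert X i) = (faces X)[i := (a, b, v)] @ [(a, v, c), (v, b, c)]"
    by (simp add: ran_insert_eq[OF abc] v_def)
  have FY: "faces (ran_insert Y i) = (faces Y)[i := (a', b', v)] @ [(a', v, c'), (v, b', c')]"
    by (simp add: ran_insert_eq[OF abc'] v_def same(1))
  have "face_agree B (faces (ran_insert X i) ! p) (faces (ran_insert Y i) ! p)"
    if p: "p < length (faces (ran_insert X i))" for p
  proof -
    have "p < length (faces X) \<or> p = length (faces X) \<or> p = length (faces X) + 1"
      using p i by auto
    moreover have "vertex_agree B v v" by (simp add: vertex_agree_def)
    ultimately show ?thesis
      using same faces corners i unfolding FX FY
      by (auto simp: nth_append nth_list_update face_agree_def)
  qed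
  moreover have "degree (ran_insert X i) u = degree (ran_insert Y i) u" if u: "u \<notin> B" for u
  proof -
    have "u \<in> face_verts (faces X ! i) \<longleftrightarrow> u \<in> face_verts (faces Y ! i)"
      using face_agree_face_verts[OF _ u] faces i by blast
    then show ?thesis
      using u same degrees by (simp add: degree_ran_insert[OF wf(1) i] degree_ran_insert[OF wf(2) iY])
  qed
  ultimately show ?thesis
    using same fin i iY ran_wf_ran_insert[OF wf(1) i] ran_wf_ran_insert[OF wf(2) iY]
    unfolding agree_outside_def by auto
qed

lemma agree_outside_ran_run:
  "agree_outside B X Y \<Longrightarrow> valid_choices (length (faces X)) is
     \<Longrightarrow> agree_outside B (ran_run X is) (ran_run Y is)"
proof (induction "is" arbitrary: X Y)
  case Nil
  then show ?case by simp
next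
  case (Cons i "is")
  then have i: "i < length (faces X)" by simp
  then show ?case
    using Cons.IH[OF agree_outside_ran_insert[OF Cons.prems(1) i]] Cons.prems by simp
qed

lemma abs_Z_diff_le_card:
  assumes "agree_outside B X Y"
  shows "\<bar>real (Z k X) - real (Z k Y)\<bar> \<le> card B"
proof -
  have n: "nverts X = nverts Y" and fin: "finite B"
    and deg: "\<And>u. u \<notin> B \<Longrightarrow> degree X u = degree Y u"
    using assms by (auto simp: agree_outside_def)
  have "\<bar>real (Z k X) - real (Z k Y)\<bar>
      = \<bar>\<Sum>u<nverts X. of_bool (degree X u = k) - of_bool (degree Y u = k)\<bar>"
    by (simp add: Z_eq_sum n sum_subtractf)
  also have "\<dots> \<le> (\<Sum>u<nverts X. \<bar>of_bool (degree X u = k) - of_bool (degree Y u = k)\<bar>)"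
    by (rule sum_abs)
  also have "\<dots> = (\<Sum>u\<in>{..<nverts X} \<inter> B. \<bar>of_bool (degree X u = k) - of_bool (degree Y u = k)\<bar>)"
    by (rule sum.mono_neutral_right) (auto simp: deg)
  also have "\<dots> \<le> (\<Sum>u\<in>{..<nverts X} \<inter> B. 1)"
    by (intro sum_mono) (auto simp: of_bool_def)
  also have "\<dots> \<le> card B" using card_mono[OF fin, of "{..<nverts X} \<inter> B"] by simp
  finally show ?thesis .
qed

lemma finite_face_verts [simp]: "finite (face_verts f)"
  by (cases f) (simp add: face_verts_def)

lemma card_face_verts_le: "card (face_verts f) \<le> 3"
  by (cases f) (auto simp: face_verts_def card_insert_le_m1)

lemma agree_outside_ran_insert_distinct:
  assumes wf: "ran_wf S" and i: "i < length (faces S)" and j: "j < length (faces S)"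
  shows "agree_outside (face_verts (faces S ! i) \<union> face_verts (faces S ! j) \<union> {nverts S})
           (ran_insert S i) (ran_insert S j)"
proof -
  define B where "B = face_verts (faces S ! i) \<union> face_verts (faces S ! j) \<union> {nverts S}"
  define v where "v = nverts S"
  obtain a b c where abc: "faces S ! i = (a, b, c)" by (metis prod_cases3)
  obtain a' b' c' where abc': "faces S ! j = (a', b', c')" by (metis prod_cases3)
  have inB: "a \<in> B" "b \<in> B" "c \<in> B" "a' \<in> B" "b' \<in> B" "c' \<in> B" "v \<in> B"
    by (auto simp: B_def abc abc' face_verts_def v_def)
  have FX: "faces (ran_insert S i) = (faces S)[i := (a, b, v)] @ [(a, v, c), (v, b, c)]"
    by (simp add: ran_insert_eq[OF abc] v_def)
  have FY: "faces (ran_insert S j) = (faces S)[j := (a', b', v)] @ [(a', v, c'), (v, b', c')]"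
    by (simp add: ran_insert_eq[OF abc'] v_def)
  have refl: "face_agree B f f" for f by (cases f) (auto simp: face_agree_def vertex_agree_def)
  have "face_agree B (faces (ran_insert S i) ! p) (faces (ran_insert S j) ! p)"
    if p: "p < length (faces (ran_insert S i))" for p
  proof -
    have "p < length (faces S) \<or> p = length (faces S) \<or> p = length (faces S) + 1"
      using p i by auto
    then show ?thesis
      using inB i j refl[of "faces S ! p"] abc abc' unfolding FX FY
      by (auto simp: nth_append nth_list_update face_agree_def vertex_agree_def)
  qed
  moreover have "degree (ran_insert S i) u = degree (ran_insert S j) u" if "u \<notin> B" for u
    using that inB by (auto simp: degree_ran_insert[OF wf i] degree_ran_insert[OF wf j] B_def v_def)
  ultimately show ?thesis
    using ran_wf_ran_insert[OF wf i] ran_wf_ran_insert[OF wf j] i j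
    unfolding agree_outside_def B_def[symmetric] by (auto simp: B_def)
qed

lemma abs_Z_ran_run_diff_le:
  assumes "ran_wf s" "valid_choices (length (faces s)) xs" "valid_choices (length (faces s)) ys"
    and "differ_at_most_once xs ys"
  shows "\<bar>real (Z k (ran_run s xs)) - real (Z k (ran_run s ys))\<bar> \<le> 7"
  using assms
proof (induction xs arbitrary: ys s)
  case Nil
  then show ?case by (cases ys) auto
next
  case (Cons i xs)
  obtain j ys' where ys: "ys = j # ys'" using Cons.prems(4) by (cases ys) auto
  have i: "i < length (faces s)" and j: "j < length (faces s)" using Cons.prems ys by auto
  show ?case
  proof (cases "i = j")
    case True
    then show ?thesis
      using Cons.IH[of "ran_insert s i" ys'] Cons.prems ys ran_wf_ran_insert[OF Cons.prems(1) i] i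
      by simp
  next
    case False
    then have ys': "ys' = xs" using Cons.prems(4) ys by simp
    define B where "B = face_verts (faces s ! i) \<union> face_verts (faces s ! j) \<union> {nverts s}"
    have "agree_outside B (ran_run (ran_insert s i) xs) (ran_run (ran_insert s j) xs)"
      unfolding B_def using Cons.prems(2) i
      by (intro agree_outside_ran_run agree_outside_ran_insert_distinct[OF Cons.prems(1) i j]) simp
    then have "\<bar>real (Z k (ran_run (ran_insert s i) xs)) - real (Z k (ran_run (ran_insert s j) xs))\<bar>
        \<le> card B"
      by (rule abs_Z_diff_le_card)
    also have "card B \<le> 7"
      using card_Un_le[of "face_verts (faces s ! i)" "face_verts (faces s ! j)"]
        card_Un_le[of "face_verts (faces s ! i) \<union> face_verts (faces s ! j)" "{nverts s}"]
        card_face_verts_le[of "faces s ! i"] card_face_verts_le[of "faces s ! j"]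
      by (simp add: B_def)
    finally show ?thesis using ys ys' by simp
  qed
qed

lemma set_pmf_of_set_lessThan [simp]: "(n :: nat) > 0 \<Longrightarrow> set_pmf (pmf_of_set {..<n}) = {..<n}"
  by (rule set_pmf_of_set) auto

fun face_choices :: "nat \<Rightarrow> nat \<Rightarrow> nat pmf list" where
  "face_choices L 0 = []"
| "face_choices L (Suc m) = pmf_of_set {..<L} # face_choices (L + 2) m"

lemma length_face_choices [simp]: "length (face_choices L m) = m"
  by (induction m arbitrary: L) auto

lemma finite_face_choices: "p \<in> set (face_choices L m) \<Longrightarrow> L > 0 \<Longrightarrow> finite (set_pmf p)"
  by (induction m arbitrary: L) auto

lemma valid_choices_face_choices:
  "L > 0 \<Longrightarrow> xs \<in> set_pmf (seq_pmf (face_choices L m)) \<Longrightarrow> valid_choices L xs"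
  by (induction m arbitrary: L xs) auto

primrec ran_steps :: "nat \<Rightarrow> ran_state \<Rightarrow> ran_state pmf" where
  "ran_steps 0 s = return_pmf s"
| "ran_steps (Suc m) s = bind_pmf (ran_step s) (ran_steps m)"

lemma ran_steps_Suc_right: "ran_steps (Suc m) s = bind_pmf (ran_steps m s) ran_step"
proof (induction m arbitrary: s)
  case 0
  have "ran_steps 0 = return_pmf" by (rule ext) simp
  then show ?case by (simp add: bind_return_pmf bind_return_pmf')
next
  case (Suc m)
  have "ran_steps (Suc m) = (\<lambda>s'. bind_pmf (ran_steps m s') ran_step)"
    by (intro ext) (rule Suc.IH)
  then have "ran_steps (Suc (Suc m)) s = bind_pmf (ran_step s) (\<lambda>s'. bind_pmf (ran_steps m s') ran_step)"
    by (simp only: ran_steps.simps(2))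
  also have "\<dots> = bind_pmf (bind_pmf (ran_step s) (ran_steps m)) ran_step"
    by (simp add: bind_assoc_pmf)
  finally show ?case by simp
qed

lemma RAN_eq_ran_steps: "RAN t = ran_steps t ran_init"
  by (induction t) (simp_all add: ran_steps_Suc_right del: ran_steps.simps(2))

lemma ran_steps_eq_map_ran_run:
  "ran_wf s \<Longrightarrow> ran_steps m s = map_pmf (ran_run s) (seq_pmf (face_choices (length (faces s)) m))"
proof (induction m arbitrary: s)
  case 0
  then show ?case by simp
next
  case (Suc m)
  define L where "L = length (faces s)"
  have L: "L > 0" using length_faces_pos[OF Suc.prems] by (simp add: L_def)
  have "ran_steps (Suc m) s = bind_pmf (pmf_of_set {..<L}) (\<lambda>i. ran_steps m (ran_insert s i))"
    by (simp add: ran_step_def bind_map_pmf L_def)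
  also have "\<dots> = bind_pmf (pmf_of_set {..<L})
      (\<lambda>i. map_pmf (ran_run (ran_insert s i)) (seq_pmf (face_choices (L + 2) m)))"
  proof (rule bind_pmf_cong[OF refl])
    fix i assume "i \<in> set_pmf (pmf_of_set {..<L})"
    then have i: "i < length (faces s)" using L by (simp add: L_def)
    show "ran_steps m (ran_insert s i) = map_pmf (ran_run (ran_insert s i)) (seq_pmf (face_choices (L + 2) m))"
      using Suc.IH[OF ran_wf_ran_insert[OF Suc.prems i]] i by (simp add: L_def)
  qed
  also have "\<dots> = map_pmf (ran_run s) (seq_pmf (face_choices L (Suc m)))"
    by (simp add: map_bind_pmf map_pmf_comp)
  finally show ?case by (simp add: L_def)
qed

lemma RAN_eq_map_seq_pmf: "RAN t = map_pmf (ran_run ran_init) (seq_pmf (face_choices 1 t))"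
proof -
  have "length (faces ran_init) = 1" by (simp add: ran_init_def)
  then show ?thesis
    using ran_steps_eq_map_ran_run[OF ran_wf_ran_init, of t] by (simp add: RAN_eq_ran_steps)
qed

lemma bounded_differences_Z:
  "bounded_differences 7 (face_choices 1 t) (\<lambda>xs. real (Z k (ran_run ran_init xs)))"
  unfolding bounded_differences_def
proof (intro ballI impI)
  fix xs ys assume "xs \<in> set_pmf (seq_pmf (face_choices 1 t))" "ys \<in> set_pmf (seq_pmf (face_choices 1 t))"
    and "differ_at_most_once xs ys"
  moreover have "length (faces ran_init) = 1" by (simp add: ran_init_def)
  ultimately show "\<bar>real (Z k (ran_run ran_init xs)) - real (Z k (ran_run ran_init ys))\<bar> \<le> 7"
    using abs_Z_ran_run_diff_le[OF ran_wf_ran_init] valid_choices_face_choices[of 1] by simp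
qed

theorem RAN_concentration:
  assumes l: "l > 0"
  shows "measure_pmf.prob (RAN t)
           {s. \<bar>real (Z k s) - measure_pmf.expectation (RAN t) (\<lambda>s. real (Z k s))\<bar> \<ge> l}
         \<le> 2 * exp (- (l\<^sup>2 / (72 * real t)))"
proof (cases "t = 0")
  case True
  have "measure_pmf.prob (RAN t)
      {s. \<bar>real (Z k s) - measure_pmf.expectation (RAN t) (\<lambda>s. real (Z k s))\<bar> \<ge> l} \<le> 1"
    by (rule measure_pmf.prob_le_1)
  moreover have "2 * exp (- (l\<^sup>2 / (72 * real t))) = 2"
    \<comment> \<open>division by \<open>real 0\<close> yields \<open>0\<close>, making the bound trivial\<close>
    using True by simp
  ultimately show ?thesis by linarith
next
  case False
  define ps where "ps = face_choices 1 t"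
  define f where "f xs = real (Z k (ran_run ran_init xs))" for xs
  have fin: "\<And>p. p \<in> set ps \<Longrightarrow> finite (set_pmf p)"
    unfolding ps_def by (auto intro: finite_face_choices)
  have ne: "ps \<noteq> []" using False by (cases t) (auto simp: ps_def)
  have "measure_pmf.prob (seq_pmf ps) {xs. \<bar>f xs - measure_pmf.expectation (seq_pmf ps) f\<bar> \<ge> l}
      \<le> 2 * exp (- 2 * l\<^sup>2 / (real (length ps) * 7\<^sup>2))"
    using McDiarmid_inequality[OF fin bounded_differences_Z[of t k, folded ps_def f_def] _ ne l]
    by simp
  also have "\<dots> \<le> 2 * exp (- (l\<^sup>2 / (72 * real t)))"
    using False by (simp add: ps_def field_simps)
  finally show ?thesis
    unfolding RAN_eq_map_seq_pmf ps_def[symmetric] by (simp add: f_def[abs_def] vimage_def)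
qed

theorem theorem1:
  fixes k :: nat
  assumes "k \<ge> 3"
  shows "(\<exists>b::real. \<exists>T::nat. \<forall>t\<ge>T.
            \<bar>measure_pmf.expectation (RAN t) (\<lambda>s. real (Z k s)) - b * real t\<bar> \<le> 3.6)
       \<and> (\<forall>(l::real) t. l > 0 \<longrightarrow>
            measure_pmf.prob (RAN t)
              {s. \<bar>real (Z k s) - measure_pmf.expectation (RAN t) (\<lambda>s. real (Z k s))\<bar> \<ge> l}
            \<le> 2 * exp (- (l\<^sup>2 / (72 * real t))))"
  using mean_Z_linear[OF assms] RAN_concentration by blast

end
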